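(* Let $(N,\langle\cdot,\cdot\rangle)$ be a 2-step nilpotent Lie group with a left-invariant Riemannian metric whose Lie algebra $\mathfrak n$ is either non-singular or almost non-singular. Then every left-invariant skew-symmetric $(1,1)$-tensor $F$ on $N$ of type II whose associated 2-form $\omega=\langle F\cdot,\cdot\rangle$ is closed and which is parallel ($\nabla F=0$, $\nabla$ the Levi-Civita connection) is identically zero.
   Context: A real Lie algebra is 2-step nilpotent if $[[U,V],W]=0$ for all $U,V,W$. Let $\mathfrak z$ be the center, $\mathfrak v=\mathfrak z^\perp$, and for $Z\in\mathfrak z$ define $j_Z:\mathfrak v\to\mathfrak v$ by $\langle j_ZV,W\rangle=\langle Z,[V,W]\rangle$. $\mathfrak n$ is non-singular if $j_Z$ is invertible for every nonzero $Z\in\mathfrak z$; it is almost non-singular if there exist $Z,\tilde Z\in\mathfrak z$ with $j_Z$ invertible and $j_{\tilde Z}$ singular. $F$ (identified with a skew-symmetric endomorphism of $\mathfrak n$) is of type II if $F(\mathfrak v)\subseteq\mathfrak z$ and $F(\mathfrak z)\subseteq\mathfrak v$. Closedness of a left-invariant 2-form means $\omega([U,V],W)+\omega([V,W],U)+\omega([W,U],V)=0$ for all $U,V,W\in\mathfrak n$. *)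

theory Defs
  imports "HOL-Analysis.Analysis"
begin

text \<open>A metric Lie algebra: the underlying space is a finite-dimensional real inner
product space (type class euclidean_space; its inner product is the left-invariant
metric), with a bracket br.\<close>

definition lie_algebra :: "('a::euclidean_space \<Rightarrow> 'a \<Rightarrow> 'a) \<Rightarrow> bool" where
  "lie_algebra br \<longleftrightarrow> bilinear br \<and> (\<forall>U V. br U V = - br V U)
     \<and> (\<forall>U V W. br (br U V) W + br (br V W) U + br (br W U) V = 0)"

definition two_step_nilpotent :: "('a::euclidean_space \<Rightarrow> 'a \<Rightarrow> 'a) \<Rightarrow> bool" where
  "two_step_nilpotent br \<longleftrightarrow> (\<forall>U V W. br (br U V) W = 0)"

definition center :: "('a::euclidean_space \<Rightarrow> 'a \<Rightarrow> 'a) \<Rightarrow> 'a set" where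
  "center br = {Z. \<forall>V. br Z V = 0}"

definition vpart :: "('a::euclidean_space \<Rightarrow> 'a \<Rightarrow> 'a) \<Rightarrow> 'a set" where
  "vpart br = {V. \<forall>Z\<in>center br. inner V Z = 0}"

text \<open>j_Z V is the unique vector with inner (j_Z V) W = inner Z [V,W] for all W
(it lies in v since [V,W] = 0 for W central); we restrict it to v.\<close>
definition jmap :: "('a::euclidean_space \<Rightarrow> 'a \<Rightarrow> 'a) \<Rightarrow> 'a \<Rightarrow> 'a \<Rightarrow> 'a" where
  "jmap br Z V = (\<Sum>b\<in>Basis. inner Z (br V b) *\<^sub>R b)"

definition j_invertible :: "('a::euclidean_space \<Rightarrow> 'a \<Rightarrow> 'a) \<Rightarrow> 'a \<Rightarrow> bool" where
  "j_invertible br Z \<longleftrightarrow> bij_betw (jmap br Z) (vpart br) (vpart br)"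

definition non_singular :: "('a::euclidean_space \<Rightarrow> 'a \<Rightarrow> 'a) \<Rightarrow> bool" where
  "non_singular br \<longleftrightarrow> (\<forall>Z\<in>center br. Z \<noteq> 0 \<longrightarrow> j_invertible br Z)"

definition almost_non_singular :: "('a::euclidean_space \<Rightarrow> 'a \<Rightarrow> 'a) \<Rightarrow> bool" where
  "almost_non_singular br \<longleftrightarrow>
     (\<exists>Z\<in>center br. \<exists>Z'\<in>center br. j_invertible br Z \<and> \<not> j_invertible br Z')"

text \<open>Levi-Civita connection of the left-invariant metric on left-invariant fields
(Koszul formula): inner (nabla U V) W = 1/2 (<[U,V],W> - <[V,W],U> + <[W,U],V>).\<close>
definition nabla :: "('a::euclidean_space \<Rightarrow> 'a \<Rightarrow> 'a) \<Rightarrow> 'a \<Rightarrow> 'a \<Rightarrow> 'a" where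
  "nabla br U V = (\<Sum>b\<in>Basis.
      ((1/2) * (inner (br U V) b - inner (br V b) U + inner (br b U) V)) *\<^sub>R b)"

definition skew_symmetric :: "('a::euclidean_space \<Rightarrow> 'a) \<Rightarrow> bool" where
  "skew_symmetric F \<longleftrightarrow> linear F \<and> (\<forall>U V. inner (F U) V = - inner U (F V))"

definition type_II :: "('a::euclidean_space \<Rightarrow> 'a \<Rightarrow> 'a) \<Rightarrow> ('a \<Rightarrow> 'a) \<Rightarrow> bool" where
  "type_II br F \<longleftrightarrow> F ` vpart br \<subseteq> center br \<and> F ` center br \<subseteq> vpart br"

definition form_closed :: "('a::euclidean_space \<Rightarrow> 'a \<Rightarrow> 'a) \<Rightarrow> ('a \<Rightarrow> 'a \<Rightarrow> real) \<Rightarrow> bool" where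
  "form_closed br \<omega> \<longleftrightarrow>
     (\<forall>U V W. \<omega> (br U V) W + \<omega> (br V W) U + \<omega> (br W U) V = 0)"

definition parallel :: "('a::euclidean_space \<Rightarrow> 'a \<Rightarrow> 'a) \<Rightarrow> ('a \<Rightarrow> 'a) \<Rightarrow> bool" where
  "parallel br F \<longleftrightarrow> (\<forall>U V. nabla br U (F V) - F (nabla br U V) = 0)"

end

theory Submission
  imports Defs
begin

text \<open>If \<open>j\<^sub>Z\<close> is invertible for a central \<open>Z\<close>, the Koszul formula gives
\<open>\<nabla>\<^sub>Z = -1/2 j\<^sub>Z\<close>, which vanishes on the center. Parallelism says that \<open>F\<close> commutes
with \<open>\<nabla>\<^sub>Z\<close>, so \<open>F (j\<^sub>Z V) = -2 \<nabla>\<^sub>Z (F V) = 0\<close> because \<open>F V\<close> is central; as \<open>j\<^sub>Z\<close> maps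
\<open>v\<close> onto \<open>v\<close>, \<open>F\<close> vanishes on \<open>v\<close>. For central \<open>W\<close> we then get \<open>F (F W) = 0\<close>, and
skew-symmetry turns this into \<open>|F W|\<^sup>2 = 0\<close>.\<close>

lemma two_step_nilpotent_bracket_in_center:
  assumes "two_step_nilpotent br"
  shows "br U V \<in> center br"
  using assms unfolding two_step_nilpotent_def center_def by auto

lemma lie_algebra_bracket_center_right:
  assumes "lie_algebra br" and "Z \<in> center br"
  shows "br V Z = 0"
proof -
  have "br V Z = - br Z V" using assms(1) unfolding lie_algebra_def by blast
  with assms(2) show ?thesis unfolding center_def by simp
qed

lemma subspace_center:
  assumes "bilinear br"
  shows "subspace (center br)"
  unfolding subspace_def center_def
  using bilinear_lzero[OF assms] bilinear_ladd[OF assms] bilinear_lmul[OF assms] by auto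

lemma center_plus_vpart:
  assumes "bilinear br"
  obtains y z where "y \<in> center br" "z \<in> vpart br" "X = y + z"
proof -
  obtain y z where yz: "y \<in> span (center br)"
      "\<And>w. w \<in> span (center br) \<Longrightarrow> orthogonal z w" "X = y + z"
    using orthogonal_subspace_decomp_exists[of "center br" X] by metis
  have "y \<in> center br"
    using yz(1) subspace_center[OF assms] by (metis span_eq_iff)
  moreover have "z \<in> vpart br"
    unfolding vpart_def using yz(2) span_base by (auto simp: orthogonal_def)
  ultimately show thesis using that yz(3) by blast
qed

lemma two_step_nilpotent_center_nontrivial:
  assumes "two_step_nilpotent br"
  shows "\<exists>Z\<in>center br. Z \<noteq> 0"
proof (rule ccontr)
  assume "\<not> (\<exists>Z\<in>center br. Z \<noteq> 0)"
  then have trivial: "center br \<subseteq> {0}" by auto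
  then have "br U V = 0" for U V
    using two_step_nilpotent_bracket_in_center[OF assms] by blast
  then have "center br = UNIV" unfolding center_def by auto
  obtain b :: 'a where "b \<in> Basis" using nonempty_Basis by blast
  with trivial \<open>center br = UNIV\<close> show False by auto
qed

lemma exists_j_invertible:
  assumes "two_step_nilpotent br" and "non_singular br \<or> almost_non_singular br"
  obtains Z where "Z \<in> center br" "j_invertible br Z"
  using assms two_step_nilpotent_center_nontrivial[OF assms(1)]
  unfolding non_singular_def almost_non_singular_def by blast

lemma jmap_center_right:
  assumes "W \<in> center br"
  shows "jmap br Z W = 0"
  using assms unfolding jmap_def center_def by simp

lemma nabla_center_left:
  assumes "lie_algebra br" and "Z \<in> center br"
  shows "nabla br Z Y = (- 1/2) *\<^sub>R jmap br Z Y"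
proof -
  have "nabla br Z Y = (\<Sum>b\<in>Basis. ((- 1/2) * inner Z (br Y b)) *\<^sub>R b)"
    unfolding nabla_def
    using assms lie_algebra_bracket_center_right[OF assms] unfolding center_def
    by (simp add: inner_commute)
  also have "\<dots> = (- 1/2) *\<^sub>R jmap br Z Y"
    unfolding jmap_def scaleR_sum_right by simp
  finally show ?thesis .
qed

lemma parallel_vanishes_on_vpart:
  assumes "lie_algebra br" and "Z \<in> center br" and "j_invertible br Z"
    and "linear F" and "F ` vpart br \<subseteq> center br" and "parallel br F"
    and "Y \<in> vpart br"
  shows "F Y = 0"
proof -
  obtain V where V: "V \<in> vpart br" "Y = jmap br Z V"
    using assms(3,7) unfolding j_invertible_def bij_betw_def by blast
  have "F V \<in> center br" using assms(5) V(1) by blast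
  then have "nabla br Z (F V) = 0"
    by (simp add: nabla_center_left[OF assms(1,2)] jmap_center_right)
  moreover have "nabla br Z (F V) = F (nabla br Z V)"
    using assms(6) unfolding parallel_def by simp
  moreover have "F (nabla br Z V) = (- 1/2) *\<^sub>R F Y"
    unfolding nabla_center_left[OF assms(1,2)] V(2) by (rule linear_cmul[OF assms(4)])
  ultimately show ?thesis by simp
qed

lemma skew_symmetric_square_eq_zero:
  assumes "skew_symmetric F" and "F (F X) = 0"
  shows "F X = 0"
proof -
  have "inner (F X) (F X) = - inner X (F (F X))"
    using assms(1) unfolding skew_symmetric_def by blast
  with assms(2) show ?thesis by simp
qed

theorem mainTheorem6:
  fixes br :: "'a::euclidean_space \<Rightarrow> 'a \<Rightarrow> 'a" and F :: "'a \<Rightarrow> 'a"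
  assumes "lie_algebra br"
    and "two_step_nilpotent br"
    and "non_singular br \<or> almost_non_singular br"
    and "skew_symmetric F"
    and "type_II br F"
    and "form_closed br (\<lambda>X Y. inner (F X) Y)"
    and "parallel br F"
  shows "F = (\<lambda>X. 0)"
proof
  fix X
  have lin: "linear F" using assms(4) unfolding skew_symmetric_def by blast
  obtain Z where Z: "Z \<in> center br" "j_invertible br Z"
    using exists_j_invertible[OF assms(2,3)] .
  have on_vpart: "F V = 0" if "V \<in> vpart br" for V
    using parallel_vanishes_on_vpart[OF assms(1) Z lin _ assms(7) that] assms(5)
    unfolding type_II_def by blast
  have on_center: "F W = 0" if "W \<in> center br" for W
    using skew_symmetric_square_eq_zero[OF assms(4)] on_vpart assms(5) that
    unfolding type_II_def by blast
  obtain y z where "y \<in> center br" "z \<in> vpart br" "X = y + z"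
    using center_plus_vpart assms(1) unfolding lie_algebra_def by blast
  then show "F X = 0" using on_center on_vpart linear_add[OF lin] by simp
qed

end
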